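(* (GIG quadrature.) Let $\gamma>0$, $\delta>0$, $p\in\mathbb{R}$, $\sigma=\sqrt{\gamma\delta}$, $n\ge1$, and let $\{z_k\}_{k=1}^n$, $\{h_k\}_{k=1}^n$ be the points and weights of the $n$-point Gauss--Hermite quadrature with respect to the standard normal density. Let $x_k=\frac{\delta}{\gamma}\phi_\sigma^{-1}(z_k)$ and $w_k=\frac{2h_k}{1+\phi_\sigma^{-1}(z_k)}$, and define $$ \bar w_k = c(\gamma,\delta,p)\,x_k^{p+1/2}\,w_k,\qquad c(\gamma,\delta,p)=\sqrt{\frac{\pi}{2}}\,\frac{\gamma^p}{\delta^{p+1}}\,\frac{e^{-\gamma\delta}}{K_p(\gamma\delta)}. $$ Then $\{x_k\}$, $\{\bar w_k\}$ serve as a quadrature with respect to the density $f_{\mathrm{GIG}}(x\,|\,\gamma,\delta,p)$, and, writing $\alpha=p+\tfrac12$, it exactly evaluates the moments of order $r=j-\alpha$ for every integer $j$ with $1-n\le j\le n$: if $\bar X\sim\mathrm{GIG}(\gamma,\delta,p)$ then $\mathbb{E}(\bar X^{r})=\sum_{k=1}^n x_k^{r}\,\bar w_k$ for $r\in\{1-n-\alpha,\,2-n-\alpha,\dots,n-\alpha\}$.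
   Context: The generalized inverse Gaussian distribution $\mathrm{GIG}(\gamma,\delta,p)$ has density $f_{\mathrm{GIG}}(x\,|\,\gamma,\delta,p)=\frac{(\gamma/\delta)^p x^{p-1}}{2K_p(\gamma\delta)}\exp\left(-\frac{\gamma^2x^2+\delta^2}{2x}\right)$ for $x>0$, where $K_p$ is the modified Bessel function of the second kind of index $p$. The inverse Gaussian density is $f_{\mathrm{IG}}(x\,|\,\gamma,\delta)=\frac{\delta}{\sqrt{2\pi x^3}}\exp\left(-\frac{(\gamma x-\delta)^2}{2x}\right)$; one has $f_{\mathrm{GIG}}(x\,|\,\gamma,\delta,p)=c(\gamma,\delta,p)\,x^{p+1/2}f_{\mathrm{IG}}(x\,|\,\gamma,\delta)$. The Gauss--Hermite quadrature is with respect to $n(z)=e^{-z^2/2}/\sqrt{2\pi}$: $z_k$ are the roots of the probabilists' Hermite polynomial $He_n$ and $\sum_k h_k q(z_k)=\int q(z)n(z)\,dz$ for polynomials $q$ of degree at most $2n-1$. Here $\phi_\sigma^{-1}(z)=1+\frac{z^2}{2\sigma^2}+\frac{z}{\sigma}\sqrt{1+\frac{z^2}{4\sigma^2}}$. *)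

theory Defs
  imports "HOL-Probability.Probability" "HOL-Computational_Algebra.Polynomial"
begin

definition besselK :: "real \<Rightarrow> real \<Rightarrow> real" where
  "besselK p x = (LBINT t:{0..}. exp (- x * cosh t) * cosh (p * t))"

fun hermiteHe :: "nat \<Rightarrow> real poly" where
  "hermiteHe 0 = 1"
| "hermiteHe (Suc 0) = [:0, 1:]"
| "hermiteHe (Suc (Suc n)) = [:0, 1:] * hermiteHe (Suc n) - smult (real (Suc n)) (hermiteHe n)"

definition gig_density :: "real \<Rightarrow> real \<Rightarrow> real \<Rightarrow> real \<Rightarrow> real" where
  "gig_density \<gamma> \<delta> p x =
     (if x > 0 then (\<gamma> / \<delta>) powr p * x powr (p - 1) / (2 * besselK p (\<gamma> * \<delta>))
        * exp (- (\<gamma>\<^sup>2 * x\<^sup>2 + \<delta>\<^sup>2) / (2 * x)) else 0)"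

definition phi_inv :: "real \<Rightarrow> real \<Rightarrow> real" where
  "phi_inv \<sigma> z = 1 + z\<^sup>2 / (2 * \<sigma>\<^sup>2) + (z / \<sigma>) * sqrt (1 + z\<^sup>2 / (4 * \<sigma>\<^sup>2))"

definition gig_c :: "real \<Rightarrow> real \<Rightarrow> real \<Rightarrow> real" where
  "gig_c \<gamma> \<delta> p = sqrt (pi / 2) * (\<gamma> powr p / \<delta> powr (p + 1))
      * exp (- \<gamma> * \<delta>) / besselK p (\<gamma> * \<delta>)"

definition gauss_hermite :: "nat \<Rightarrow> (nat \<Rightarrow> real) \<Rightarrow> (nat \<Rightarrow> real) \<Rightarrow> bool" where
  "gauss_hermite n z h \<longleftrightarrow>
     inj_on z {..<n} \<and> (\<forall>k<n. poly (hermiteHe n) (z k) = 0) \<and>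
     (\<forall>q :: real poly. degree q \<le> 2 * n - 1 \<longrightarrow>
        (\<Sum>k<n. h k * poly q (z k)) = (\<integral>x. poly q x * std_normal_density x \<partial>lborel))"

end

theory Submission
  imports Defs "HOL-Real_Asymp.Real_Asymp"
begin

text \<open>Since f_GIG(x) = c(\<gamma>,\<delta>,p) x^(p+1/2) f_IG(x), the GIG moment of order r = j - p - 1/2 is
  c times the j-th moment of the inverse Gaussian law.  The Michael--Schucany--Haas substitution
  x = (\<delta>/\<gamma>) phi_inv \<sigma> t turns f_IG(x) dx into 2 n(t) dt / (1 + phi_inv \<sigma> t).  Writing
  sinh \<theta> = t/(2\<sigma>) we have phi_inv \<sigma> t = exp (2\<theta>), so the j-th moment becomes 2 (\<delta>/\<gamma>)^j
  times the normal expectation of exp ((2j-1)\<theta>) / (2 cosh \<theta>).  The even part of this function,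
  cosh ((2j-1)\<theta>) / cosh \<theta>, is a polynomial of degree |2j-1| - 1 \<le> 2n - 2 in sinh \<theta> = t/(2\<sigma>),
  and the n-point Gauss--Hermite rule, exact up to degree 2n - 1 and symmetric under t \<mapsto> -t,
  integrates the function exactly.\<close>

lemma poly_hermiteHe_minus: "poly (hermiteHe n) (- x) = (- 1) ^ n * poly (hermiteHe n) x"
proof (induction n rule: hermiteHe.induct)
  case (3 n)
  have "poly (hermiteHe (Suc (Suc n))) (- x)
      = - x * poly (hermiteHe (Suc n)) (- x) - real (Suc n) * poly (hermiteHe n) (- x)"
    by simp
  also have "\<dots> = (- 1) ^ Suc (Suc n) * (x * poly (hermiteHe (Suc n)) x - real (Suc n) * poly (hermiteHe n) x)"
    unfolding 3 by (simp add: algebra_simps)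
  finally show ?case by simp
qed simp_all

lemma hermiteHe_degree_coeff: "degree (hermiteHe n) \<le> n \<and> coeff (hermiteHe n) n = 1"
proof (induction n rule: hermiteHe.induct)
  case (3 n)
  have "degree ([:0, 1:] * hermiteHe (Suc n)) \<le> Suc (Suc n)"
    using 3 by (simp add: degree_pCons_le)
  moreover have "degree (smult (real (Suc n)) (hermiteHe n)) \<le> Suc (Suc n)"
    using 3 by (meson degree_smult_le le_SucI order_trans)
  ultimately have "degree (hermiteHe (Suc (Suc n))) \<le> Suc (Suc n)"
    by (simp add: degree_diff_le)
  moreover have "coeff (hermiteHe n) (Suc (Suc n)) = 0"
    using 3 by (intro coeff_eq_0) simp
  ultimately show ?case using 3 by simp
qed simp_all

lemma hermiteHe_nonzero: "hermiteHe n \<noteq> 0"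
  using hermiteHe_degree_coeff[of n] by auto

lemma gauss_hermite_nodes:
  assumes "gauss_hermite n z h"
  shows "z ` {..<n} = {x. poly (hermiteHe n) x = 0}"
proof -
  let ?R = "{x. poly (hermiteHe n) x = 0}"
  have inj: "inj_on z {..<n}" and "z ` {..<n} \<subseteq> ?R"
    using assms unfolding gauss_hermite_def by auto
  moreover have "finite ?R"
    using poly_roots_finite[OF hermiteHe_nonzero] .
  moreover have "card ?R \<le> n"
    using card_poly_roots_bound[OF hermiteHe_nonzero[of n]] hermiteHe_degree_coeff[of n] by linarith
  ultimately show ?thesis
    by (metis card_image card_lessThan card_seteq)
qed

lemma gauss_hermite_node_minus:
  assumes "gauss_hermite n z h" and "k < n"
  shows "\<exists>i<n. z i = - z k"
proof -
  have "poly (hermiteHe n) (z k) = 0"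
    using assms unfolding gauss_hermite_def by auto
  then have "- z k \<in> z ` {..<n}"
    unfolding gauss_hermite_nodes[OF assms(1)] by (simp add: poly_hermiteHe_minus)
  then show ?thesis by force
qed

lemma poly_interpolation_exists:
  fixes z v :: "nat \<Rightarrow> 'a::field"
  assumes inj: "inj_on z {..<n}"
  shows "\<exists>M. degree M \<le> n - 1 \<and> (\<forall>i<n. poly M (z i) = v i)"
proof -
  define L where "L k = (\<Prod>i\<in>{..<n} - {k}. [:- z i, 1:])" for k
  define M where "M = (\<Sum>k<n. smult (v k / poly (L k) (z k)) (L k))"
  have "degree (L k) \<le> n - 1" if "k < n" for k
  proof -
    have "degree (L k) \<le> sum (degree \<circ> (\<lambda>i. [:- z i, 1:])) ({..<n} - {k})"
      unfolding L_def by (rule degree_prod_sum_le) simp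
    also have "\<dots> = n - 1" using that by simp
    finally show ?thesis .
  qed
  then have "degree M \<le> n - 1"
    unfolding M_def by (intro degree_sum_le order_trans[OF degree_smult_le]) auto
  moreover have "poly M (z i) = v i" if i: "i < n" for i
  proof -
    have "poly (L k) (z i) = 0" if "k < n" "k \<noteq> i" for k
      using that i unfolding L_def poly_prod by (auto intro: prod_zero)
    moreover have "poly (L i) (z i) \<noteq> 0"
      using inj i unfolding L_def poly_prod by (auto simp: inj_on_def)
    ultimately have "poly M (z i) = (\<Sum>k<n. if k = i then v i else 0)"
      unfolding M_def poly_sum by (intro sum.cong) auto
    then show ?thesis using i by simp
  qed
  ultimately show ?thesis by blast
qed

lemma integral_std_normal_reflect:
  "(\<integral>x. f (- x) * std_normal_density x \<partial>lborel) = (\<integral>x. f x * std_normal_density x \<partial>lborel)"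
  using lborel_integral_real_affine[where c = "- 1" and t = 0 and f = "\<lambda>x. f x * std_normal_density x"]
  by (simp add: normal_density_def)

lemma integrable_poly_std_normal: "integrable lborel (\<lambda>x. poly q x * std_normal_density x)"
proof -
  have "integrable lborel (\<lambda>x. \<Sum>i\<le>degree q. coeff q i * (std_normal_density x * x ^ i))"
    by (auto intro!: integrable_std_normal_moment)
  then show ?thesis
    by (simp add: poly_altdef sum_distrib_left algebra_simps)
qed

text \<open>The weights are symmetric as well: compare the quadratures of an interpolant M of v at the
  nodes and of M(-x).\<close>
lemma gauss_hermite_sum_reflect:
  assumes gh: "gauss_hermite n z h"
  shows "(\<Sum>k<n. h k * v (- z k)) = (\<Sum>k<n. h k * v (z k))"
proof -
  have exact: "(\<Sum>k<n. h k * poly q (z k)) = (\<integral>x. poly q x * std_normal_density x \<partial>lborel)"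
    if "degree q \<le> 2 * n - 1" for q
    using gh that unfolding gauss_hermite_def by auto
  obtain M where deg: "degree M \<le> n - 1" and M: "\<forall>i<n. poly M (z i) = v (z i)"
    using poly_interpolation_exists[of z n "v \<circ> z"] gh unfolding gauss_hermite_def by auto
  let ?N = "pcompose M [:0, - 1:]"
  have "(\<Sum>k<n. h k * v (- z k)) = (\<Sum>k<n. h k * poly ?N (z k))"
  proof (intro sum.cong refl)
    fix k assume "k \<in> {..<n}"
    then obtain i where "i < n" "z i = - z k"
      using gauss_hermite_node_minus[OF gh] by blast
    then show "h k * v (- z k) = h k * poly ?N (z k)"
      using M by (simp add: poly_pcompose) metis
  qed
  also have "\<dots> = (\<integral>x. poly M (- x) * std_normal_density x \<partial>lborel)"
    using exact[of ?N] deg by (simp add: degree_pcompose poly_pcompose)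
  also have "\<dots> = (\<Sum>k<n. h k * poly M (z k))"
    using exact[of M] deg by (simp add: integral_std_normal_reflect)
  also have "\<dots> = (\<Sum>k<n. h k * v (z k))"
    using M by simp
  finally show ?thesis .
qed

lemma gauss_hermite_exact_even_part:
  assumes gh: "gauss_hermite n z h"
    and f_meas: "f \<in> borel_measurable borel" and f_nonneg: "\<And>t. f t \<ge> 0"
    and deg: "degree q \<le> 2 * n - 1" and q: "\<And>t. f t + f (- t) = poly q t"
  shows "integrable lborel (\<lambda>t. f t * std_normal_density t)"
    and "(\<Sum>k<n. h k * f (z k)) = (\<integral>t. f t * std_normal_density t \<partial>lborel)"
proof -
  have dominated: "integrable lborel (\<lambda>t. g t * std_normal_density t)"
    if "g \<in> borel_measurable borel" "\<And>t. 0 \<le> g t" "\<And>t. g t \<le> poly q t" for g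
  proof (rule Bochner_Integration.integrable_bound[OF integrable_poly_std_normal[of q]])
    show "(\<lambda>t. g t * std_normal_density t) \<in> borel_measurable lborel"
      using that(1) by measurable
    show "AE t in lborel. norm (g t * std_normal_density t) \<le> norm (poly q t * std_normal_density t)"
      using that(2) order_trans[OF that(3) abs_ge_self]
      by (auto simp: abs_mult normal_density_nonneg intro!: mult_right_mono)
  qed
  have f_le: "f t \<le> poly q t" and f_minus_le: "f (- t) \<le> poly q t" for t
    using f_nonneg[of t] f_nonneg[of "- t"] q[of t] by linarith+
  have int_f: "integrable lborel (\<lambda>t. f t * std_normal_density t)"
    using dominated[OF f_meas f_nonneg f_le] .
  have int_f_minus: "integrable lborel (\<lambda>t. f (- t) * std_normal_density t)"
  proof (rule dominated)
    show "(\<lambda>t. f (- t)) \<in> borel_measurable borel"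
      using f_meas by measurable
  qed (use f_nonneg f_minus_le in auto)
  have "(\<integral>t. poly q t * std_normal_density t \<partial>lborel)
      = (\<integral>t. f t * std_normal_density t \<partial>lborel) + (\<integral>t. f (- t) * std_normal_density t \<partial>lborel)"
    unfolding q[symmetric] distrib_right by (rule Bochner_Integration.integral_add[OF int_f int_f_minus])
  also have "\<dots> = 2 * (\<integral>t. f t * std_normal_density t \<partial>lborel)"
    by (simp add: integral_std_normal_reflect)
  finally have "(\<integral>t. poly q t * std_normal_density t \<partial>lborel)
      = 2 * (\<integral>t. f t * std_normal_density t \<partial>lborel)" .
  moreover have "(\<Sum>k<n. h k * poly q (z k)) = (\<integral>t. poly q t * std_normal_density t \<partial>lborel)"
    using gh deg unfolding gauss_hermite_def by auto
  moreover have "(\<Sum>k<n. h k * poly q (z k)) = 2 * (\<Sum>k<n. h k * f (z k))"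
    using gauss_hermite_sum_reflect[OF gh, of f]
    by (simp add: q[symmetric] distrib_left sum.distrib)
  ultimately show "(\<Sum>k<n. h k * f (z k)) = (\<integral>t. f t * std_normal_density t \<partial>lborel)"
    by simp
  show "integrable lborel (\<lambda>t. f t * std_normal_density t)" by (rule int_f)
qed

lemma phi_inv_eq_exp_arsinh:
  assumes "\<sigma> > 0"
  shows "phi_inv \<sigma> = (\<lambda>t. exp (2 * arsinh (t / (2 * \<sigma>))))"
proof
  fix t
  define u where "u = t / (2 * \<sigma>)"
  have "t\<^sup>2 / (2 * \<sigma>\<^sup>2) = 2 * u\<^sup>2" "t / \<sigma> = 2 * u" "t\<^sup>2 / (4 * \<sigma>\<^sup>2) = u\<^sup>2"
    using assms unfolding u_def by (simp_all add: power_divide power_mult_distrib)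
  then have "phi_inv \<sigma> t = 1 + 2 * u\<^sup>2 + 2 * u * sqrt (1 + u\<^sup>2)"
    by (simp only: phi_inv_def)
  also have "\<dots> = (u + sqrt (1 + u\<^sup>2))\<^sup>2"
    by (simp only: power2_sum real_sqrt_pow2[OF add_nonneg_nonneg[OF zero_le_one zero_le_power2]])
  also have "u + sqrt (1 + u\<^sup>2) = exp (arsinh u)"
    using cosh_plus_sinh[of "arsinh u"] by (simp add: cosh_arsinh_real add.commute)
  finally show "phi_inv \<sigma> t = exp (2 * arsinh (t / (2 * \<sigma>)))"
    by (simp add: exp_double u_def)
qed

lemma phi_inv_pos: "\<sigma> > 0 \<Longrightarrow> phi_inv \<sigma> t > 0"
  by (simp add: phi_inv_eq_exp_arsinh)

lemma phi_inv_has_real_derivative: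
  assumes "\<sigma> > 0"
  shows "(phi_inv \<sigma> has_real_derivative phi_inv \<sigma> t / (\<sigma> * cosh (arsinh (t / (2 * \<sigma>))))) (at t)"
proof -
  have "((\<lambda>t. arsinh (t / (2 * \<sigma>))) has_real_derivative
      1 / sqrt ((t / (2 * \<sigma>))\<^sup>2 + 1) * (1 / (2 * \<sigma>))) (at t)"
    by (rule DERIV_chain2[OF arsinh_real_has_field_derivative]) (use assms in \<open>auto intro!: derivative_eq_intros\<close>)
  then have "((\<lambda>t. exp (2 * arsinh (t / (2 * \<sigma>)))) has_real_derivative
      exp (2 * arsinh (t / (2 * \<sigma>))) * (2 * (1 / sqrt ((t / (2 * \<sigma>))\<^sup>2 + 1) * (1 / (2 * \<sigma>))))) (at t)"
    by (rule DERIV_chain2[OF DERIV_exp DERIV_cmult])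
  then show ?thesis
    using assms by (simp add: phi_inv_eq_exp_arsinh cosh_arsinh_real ac_simps)
qed

lemma isCont_phi_inv: "\<sigma> > 0 \<Longrightarrow> isCont (phi_inv \<sigma>) t"
  using phi_inv_has_real_derivative DERIV_isCont by blast

lemma phi_inv_at_bot:
  assumes "\<sigma> > 0"
  shows "(phi_inv \<sigma> \<longlongrightarrow> 0) at_bot"
proof -
  have "((\<lambda>t. exp (2 * arsinh (t / (2 * \<sigma>)))) \<longlongrightarrow> 0) at_bot"
    using assms by real_asymp
  then show ?thesis
    using assms by (simp add: phi_inv_eq_exp_arsinh)
qed

lemma phi_inv_at_top:
  assumes "\<sigma> > 0"
  shows "filterlim (phi_inv \<sigma>) at_top at_top"
proof -
  have "filterlim (\<lambda>t. exp (2 * arsinh (t / (2 * \<sigma>)))) at_top at_top"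
    using assms by real_asymp
  then show ?thesis
    using assms by (simp add: phi_inv_eq_exp_arsinh)
qed

text \<open>The recurrence comes from cosh ((m+2)x) + cosh ((m-2)x) = 2 cosh (2x) cosh (mx) and
  2 cosh (2x) = 2 + 4 (sinh x)^2.\<close>
fun cosh_odd_poly :: "nat \<Rightarrow> real poly" where
  "cosh_odd_poly 0 = 1"
| "cosh_odd_poly (Suc 0) = [:1, 0, 4:]"
| "cosh_odd_poly (Suc (Suc k)) = [:2, 0, 4:] * cosh_odd_poly (Suc k) - cosh_odd_poly k"

lemma degree_cosh_odd_poly: "degree (cosh_odd_poly k) \<le> 2 * k"
proof (induction k rule: cosh_odd_poly.induct)
  case (3 k)
  have "degree ([:2, 0, 4:] * cosh_odd_poly (Suc k)) \<le> 2 * Suc (Suc k)"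
    by (rule order_trans[OF degree_mult_le]) (use 3 in auto)
  moreover have "degree (cosh_odd_poly k) \<le> 2 * Suc (Suc k)"
    using 3 by simp
  ultimately show ?case
    by (simp add: degree_diff_le)
qed auto

lemma poly_cosh_odd_poly: "poly (cosh_odd_poly k) (sinh x) * cosh x = cosh ((2 * real k + 1) * x)"
proof (induction k rule: cosh_odd_poly.induct)
  case 2
  have "cosh ((2 * real (Suc 0) + 1) * x) = cosh (2 * x + x)"
    by (simp add: algebra_simps)
  also have "\<dots> = (1 + 4 * (sinh x)\<^sup>2) * cosh x"
    by (simp only: cosh_add cosh_double sinh_double cosh_square_eq) (simp add: algebra_simps power2_eq_square)
  finally show ?case
    by (simp add: algebra_simps power2_eq_square)
next
  case (3 k)
  let ?c = "\<lambda>m. cosh ((2 * real m + 1) * x)"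
  have "poly (cosh_odd_poly (Suc (Suc k))) (sinh x) * cosh x
      = (2 + 4 * (sinh x)\<^sup>2) * (poly (cosh_odd_poly (Suc k)) (sinh x) * cosh x)
        - poly (cosh_odd_poly k) (sinh x) * cosh x"
    by (simp add: algebra_simps power2_eq_square)
  also have "\<dots> = 2 * cosh (2 * x) * ?c (Suc k) - ?c k"
    unfolding 3 by (simp add: cosh_double cosh_square_eq)
  also have "\<dots> = ?c (Suc (Suc k))"
    using cosh_add[of "(2 * real (Suc k) + 1) * x" "2 * x"] cosh_diff[of "(2 * real (Suc k) + 1) * x" "2 * x"]
    by (simp add: algebra_simps)
  finally show ?case .
qed simp

text \<open>After the substitution x = (\<delta>/\<gamma>) phi_inv \<sigma> t, the inverse Gaussian moment of
  order j is 2 (\<delta>/\<gamma>)^j times the standard normal expectation of this function.\<close>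
definition msh_integrand :: "real \<Rightarrow> int \<Rightarrow> real \<Rightarrow> real" where
  "msh_integrand \<sigma> j t = phi_inv \<sigma> t powr real_of_int j / (1 + phi_inv \<sigma> t)"

lemma msh_integrand_eq_exp_arsinh:
  assumes "\<sigma> > 0"
  shows "msh_integrand \<sigma> j t
    = exp ((2 * of_int j - 1) * arsinh (t / (2 * \<sigma>))) / (2 * cosh (arsinh (t / (2 * \<sigma>))))"
proof -
  define \<theta> where "\<theta> = arsinh (t / (2 * \<sigma>))"
  have "phi_inv \<sigma> t powr real_of_int j = exp (2 * of_int j * \<theta>)"
    using assms by (simp add: phi_inv_eq_exp_arsinh powr_def \<theta>_def algebra_simps)
  moreover have "1 + phi_inv \<sigma> t = exp \<theta> * (2 * cosh \<theta>)"
    using assms by (simp add: phi_inv_eq_exp_arsinh cosh_field_def exp_minus exp_double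
        power2_eq_square \<theta>_def field_simps)
  moreover have "exp (2 * of_int j * \<theta>) = exp \<theta> * exp ((2 * of_int j - 1) * \<theta>)"
    by (simp add: exp_add[symmetric] algebra_simps)
  ultimately show ?thesis
    unfolding msh_integrand_def \<theta>_def[symmetric] by simp
qed

lemma msh_integrand_even_part:
  assumes "\<sigma> > 0" and "1 - int n \<le> j" and "j \<le> int n"
  shows "\<exists>q. degree q \<le> 2 * n - 1 \<and> (\<forall>t. msh_integrand \<sigma> j t + msh_integrand \<sigma> j (- t) = poly q t)"
proof -
  define k where "k = nat (if j \<ge> 1 then j - 1 else - j)"
  have k_le: "k \<le> n - 1"
    using assms unfolding k_def by auto
  have k_abs: "2 * real k + 1 = \<bar>2 * of_int j - 1\<bar>"
    unfolding k_def by auto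
  define q where "q = pcompose (cosh_odd_poly k) [:0, 1 / (2 * \<sigma>):]"
  have "degree q \<le> 2 * k"
    unfolding q_def using degree_cosh_odd_poly[of k] by (simp add: degree_pcompose)
  moreover have "msh_integrand \<sigma> j t + msh_integrand \<sigma> j (- t) = poly q t" for t
  proof -
    define \<theta> where "\<theta> = arsinh (t / (2 * \<sigma>))"
    define m where "m = 2 * of_int j - (1 :: real)"
    have "msh_integrand \<sigma> j t + msh_integrand \<sigma> j (- t) = (exp (m * \<theta>) + exp (- (m * \<theta>))) / (2 * cosh \<theta>)"
      using assms(1) by (simp add: msh_integrand_eq_exp_arsinh \<theta>_def m_def add_divide_distrib)
    also have "\<dots> = cosh (\<bar>m\<bar> * \<theta>) / cosh \<theta>"
      by (simp add: cosh_field_def abs_if)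
    also have "\<dots> = poly (cosh_odd_poly k) (sinh \<theta>)"
      using poly_cosh_odd_poly[of k \<theta>] unfolding k_abs m_def[symmetric] by (simp add: field_simps)
    also have "\<dots> = poly q t"
      unfolding q_def \<theta>_def by (simp add: poly_pcompose)
    finally show ?thesis .
  qed
  ultimately show ?thesis
    using k_le by (intro exI[of _ q]) auto
qed

lemma msh_integrand_nonneg: "\<sigma> > 0 \<Longrightarrow> msh_integrand \<sigma> j t \<ge> 0"
  using phi_inv_pos[of \<sigma> t] by (simp add: msh_integrand_def)

lemma borel_measurable_msh_integrand:
  assumes "\<sigma> > 0"
  shows "msh_integrand \<sigma> j \<in> borel_measurable borel"
proof -
  have "continuous_on UNIV (\<lambda>t. exp ((2 * of_int j - 1) * arsinh (t / (2 * \<sigma>)))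
      / (2 * cosh (arsinh (t / (2 * \<sigma>)))))"
    using assms by (intro continuous_intros) (auto simp: less_imp_neq[OF cosh_real_pos, symmetric])
  then show ?thesis
    using assms by (intro borel_measurable_continuous_onI) (simp add: msh_integrand_eq_exp_arsinh)
qed

text \<open>Only used for x > 0; unlike gig_density it is not cut off at 0.\<close>
definition ig_density :: "real \<Rightarrow> real \<Rightarrow> real \<Rightarrow> real" where
  "ig_density \<gamma> \<delta> x = \<delta> / sqrt (2 * pi * x ^ 3) * exp (- (\<gamma> * x - \<delta>)\<^sup>2 / (2 * x))"

lemma ig_density_nonneg: "\<delta> > 0 \<Longrightarrow> x > 0 \<Longrightarrow> ig_density \<gamma> \<delta> x \<ge> 0"
  by (simp add: ig_density_def)

lemma isCont_ig_density: "x > 0 \<Longrightarrow> isCont (ig_density \<gamma> \<delta>) x"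
  unfolding ig_density_def by (intro continuous_intros) auto

lemma gig_density_eq_ig_density:
  assumes "\<gamma> > 0" and "\<delta> > 0" and "x > 0"
  shows "gig_density \<gamma> \<delta> p x = gig_c \<gamma> \<delta> p * x powr (p + 1/2) * ig_density \<gamma> \<delta> x"
proof -
  have exponent: "exp (- \<gamma> * \<delta>) * exp (- (\<gamma> * x - \<delta>)\<^sup>2 / (2 * x)) = exp (- (\<gamma>\<^sup>2 * x\<^sup>2 + \<delta>\<^sup>2) / (2 * x))"
    unfolding exp_add[symmetric] using assms by (simp add: field_simps power2_eq_square)
  have power: "x powr (p + 1/2) = x powr (p - 1) * (x * sqrt x)"
  proof -
    have "x powr (p + 1/2) = x powr ((p - 1) + 1 + 1/2)"
      by simp
    then show ?thesis
      using assms by (simp only: powr_add) (simp add: powr_half_sqrt)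
  qed
  have root: "sqrt (2 * pi * x ^ 3) = 2 * sqrt (pi / 2) * (x * sqrt x)"
  proof -
    have "2 * pi * x ^ 3 = 2\<^sup>2 * (pi / 2) * x\<^sup>2 * x"
      by (simp add: power2_eq_square power3_eq_cube)
    then have "sqrt (2 * pi * x ^ 3) = sqrt (2\<^sup>2) * sqrt (pi / 2) * sqrt (x\<^sup>2) * sqrt x"
      by (simp only: real_sqrt_mult)
    then show ?thesis
      using assms by simp
  qed
  have scale: "\<gamma> powr p / \<delta> powr (p + 1) * \<delta> = (\<gamma> / \<delta>) powr p"
    using assms by (simp add: powr_add powr_divide)
  have "gig_c \<gamma> \<delta> p * x powr (p + 1/2) * ig_density \<gamma> \<delta> x
      = (\<gamma> powr p / \<delta> powr (p + 1) * \<delta>) * x powr (p - 1) / (2 * besselK p (\<gamma> * \<delta>))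
        * (exp (- \<gamma> * \<delta>) * exp (- (\<gamma> * x - \<delta>)\<^sup>2 / (2 * x)))"
    unfolding gig_c_def ig_density_def power root using assms by (simp add: field_simps)
  then show ?thesis
    unfolding scale exponent gig_density_def using assms by simp
qed

lemma ig_density_at_scaled_square:
  assumes "\<gamma> > 0" and "\<delta> > 0" and "s > 0"
  defines "\<sigma> \<equiv> sqrt (\<gamma> * \<delta>)" and "a \<equiv> \<delta> / \<gamma>"
  shows "ig_density \<gamma> \<delta> (a * s\<^sup>2) * (a * s\<^sup>2 / (\<sigma> * ((s + 1 / s) / 2)))
       = 2 * std_normal_density (\<sigma> * (s - 1 / s)) / (1 + s\<^sup>2)"
proof -
  have \<sigma>: "\<sigma> > 0" and a: "a > 0"
    using assms by (simp_all add: \<sigma>_def a_def)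
  have \<delta>: "\<delta> = sqrt a * \<sigma>" and \<gamma>: "\<gamma> = \<sigma> / sqrt a"
    using assms by (simp_all add: a_def \<sigma>_def real_sqrt_divide real_sqrt_mult field_simps)
  have exponent: "- (\<gamma> * (a * s\<^sup>2) - \<delta>)\<^sup>2 / (2 * (a * s\<^sup>2)) = - (\<sigma> * (s - 1 / s))\<^sup>2 / 2"
    using a assms(3) unfolding \<delta> \<gamma> by (simp add: field_simps power2_eq_square)
  have "2 * pi * (a * s\<^sup>2) ^ 3 = (2 * pi) * (a * s\<^sup>2)\<^sup>2 * (a * s\<^sup>2)"
    by (simp add: power3_eq_cube power2_eq_square)
  then have "sqrt (2 * pi * (a * s\<^sup>2) ^ 3) = sqrt (2 * pi) * sqrt ((a * s\<^sup>2)\<^sup>2) * sqrt (a * s\<^sup>2)"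
    by (simp only: real_sqrt_mult)
  also have "\<dots> = sqrt (2 * pi) * (a * s\<^sup>2) * (sqrt a * s)"
    using a assms(3) by (simp add: real_sqrt_mult)
  finally have root: "sqrt (2 * pi * (a * s\<^sup>2) ^ 3) = sqrt (2 * pi) * (a * s\<^sup>2) * (sqrt a * s)" .
  define T where "T = 1 + s\<^sup>2"
  have "T > 0"
    unfolding T_def by (simp add: add_pos_nonneg)
  have half_sum: "(s + 1 / s) / 2 = T / (2 * s)"
    unfolding T_def using assms(3) by (simp add: field_simps power2_eq_square)
  have "ig_density \<gamma> \<delta> (a * s\<^sup>2) * (a * s\<^sup>2 / (\<sigma> * (T / (2 * s))))
      = \<delta> / (sqrt a * \<sigma>) * (2 * (exp (- (\<sigma> * (s - 1 / s))\<^sup>2 / 2) / sqrt (2 * pi)) / T)"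
    unfolding ig_density_def exponent root using a \<sigma> assms(3) \<open>T > 0\<close> by (simp add: field_simps)
  then show ?thesis
    unfolding half_sum T_def using a \<sigma> by (simp add: \<delta> normal_density_def)
qed

lemma ig_density_msh_jacobian:
  assumes "\<gamma> > 0" and "\<delta> > 0"
  defines "\<sigma> \<equiv> sqrt (\<gamma> * \<delta>)"
  shows "ig_density \<gamma> \<delta> (\<delta> / \<gamma> * phi_inv \<sigma> t) * (\<delta> / \<gamma> * phi_inv \<sigma> t / (\<sigma> * cosh (arsinh (t / (2 * \<sigma>)))))
       = 2 * std_normal_density t / (1 + phi_inv \<sigma> t)"
proof -
  define \<theta> where "\<theta> = arsinh (t / (2 * \<sigma>))"
  define s where "s = exp \<theta>"
  have \<sigma>: "\<sigma> > 0" and s: "s > 0"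
    using assms by (simp_all add: \<sigma>_def s_def)
  have phi: "phi_inv \<sigma> t = s\<^sup>2"
    using \<sigma> by (simp add: phi_inv_eq_exp_arsinh s_def \<theta>_def exp_double)
  have "t / (2 * \<sigma>) = (s - 1 / s) / 2"
    using sinh_arsinh_real[of "t / (2 * \<sigma>)"]
    by (simp add: sinh_field_def exp_minus inverse_eq_divide s_def \<theta>_def)
  then have t: "t = \<sigma> * (s - 1 / s)"
    using \<sigma> by (simp add: field_simps)
  have cosh: "cosh \<theta> = (s + 1 / s) / 2"
    by (simp add: cosh_field_def exp_minus inverse_eq_divide s_def)
  show ?thesis
    unfolding phi \<theta>_def[symmetric] cosh
    using ig_density_at_scaled_square[OF assms(1,2) s, folded \<sigma>_def, folded t] .
qed

lemma integral_substitution_phi_inv: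
  fixes f :: "real \<Rightarrow> real" and a \<sigma> :: real
  defines "J \<equiv> \<lambda>t. a * phi_inv \<sigma> t / (\<sigma> * cosh (arsinh (t / (2 * \<sigma>))))"
  assumes "a > 0" and "\<sigma> > 0"
    and f_cont: "continuous_on {0<..} f" and f_nonneg: "\<And>x. x > 0 \<Longrightarrow> f x \<ge> 0"
    and integrable: "integrable lborel (\<lambda>t. f (a * phi_inv \<sigma> t) * J t)"
  shows "set_integrable lborel {0<..} f"
    and "(LBINT x:{0<..}. f x) = (\<integral>t. f (a * phi_inv \<sigma> t) * J t \<partial>lborel)"
proof -
  define G where "G t = a * phi_inv \<sigma> t" for t
  have G_pos: "G t > 0" for t
    using assms phi_inv_pos by (simp add: G_def)
  have deriv: "DERIV G t :> J t" for t
    unfolding G_def[abs_def] J_def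
    using DERIV_cmult[OF phi_inv_has_real_derivative[OF assms(3)], of a t]
    by (simp only: times_divide_eq_right)
  have f_cont_G: "isCont f (G t)" for t
    using f_cont G_pos[of t] by (simp add: continuous_on_eq_continuous_at)
  have J_cont: "isCont J t" for t
    unfolding J_def using assms(3) isCont_phi_inv[OF assms(3)]
    by (intro continuous_intros) (auto simp: less_imp_neq[OF cosh_real_pos, symmetric])
  have J_nonneg: "0 \<le> J t" for t
    unfolding J_def using assms phi_inv_pos[OF assms(3), of t] by simp
  have lim_bot: "((ereal \<circ> G \<circ> real_of_ereal) \<longlongrightarrow> ereal 0) (at_right (- \<infinity>))"
  proof -
    have "(G \<longlongrightarrow> a * 0) at_bot"
      unfolding G_def[abs_def] by (intro tendsto_intros phi_inv_at_bot[OF assms(3)])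
    then show ?thesis
      unfolding ereal_tendsto_simps by simp
  qed
  have lim_top: "((ereal \<circ> G \<circ> real_of_ereal) \<longlongrightarrow> \<infinity>) (at_left \<infinity>)"
  proof -
    have "filterlim G at_top at_top"
      unfolding G_def[abs_def]
      by (rule filterlim_tendsto_pos_mult_at_top[OF tendsto_const assms(2) phi_inv_at_top[OF assms(3)]])
    then show ?thesis
      unfolding ereal_tendsto_simps by simp
  qed
  have "set_integrable lborel (einterval (- \<infinity>) \<infinity>) (\<lambda>t. f (G t) * J t)"
    unfolding set_integrable_def using integrable by (simp add: G_def)
  note substitution = interval_integral_substitution_nonneg[OF _ deriv f_cont_G J_cont
      f_nonneg[OF G_pos] J_nonneg lim_bot lim_top this]
  show "set_integrable lborel {0<..} f"
    using substitution(1) by simp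
  have "(LBINT x:{0<..}. f x) = (LBINT t=-\<infinity>..\<infinity>. f (G t) * J t)"
    using substitution(2) by (simp add: interval_integral_Ioi)
  then show "(LBINT x:{0<..}. f x) = (\<integral>t. f (a * phi_inv \<sigma> t) * J t \<partial>lborel)"
    by (simp add: interval_lebesgue_integral_def set_lebesgue_integral_def G_def)
qed

lemma ig_integral_msh_substitution:
  fixes \<gamma> \<delta> :: real and g :: "real \<Rightarrow> real"
  defines "\<sigma> \<equiv> sqrt (\<gamma> * \<delta>)"
  assumes "\<gamma> > 0" and "\<delta> > 0"
    and g_cont: "continuous_on {0<..} g" and g_nonneg: "\<And>x. x > 0 \<Longrightarrow> g x \<ge> 0"
    and integrable: "integrable lborel
      (\<lambda>t. g (\<delta> / \<gamma> * phi_inv \<sigma> t) * (2 * std_normal_density t / (1 + phi_inv \<sigma> t)))"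
  shows "set_integrable lborel {0<..} (\<lambda>x. g x * ig_density \<gamma> \<delta> x)"
    and "(LBINT x:{0<..}. g x * ig_density \<gamma> \<delta> x)
       = (\<integral>t. g (\<delta> / \<gamma> * phi_inv \<sigma> t) * (2 * std_normal_density t / (1 + phi_inv \<sigma> t)) \<partial>lborel)"
proof -
  have \<sigma>: "\<sigma> > 0" and a: "\<delta> / \<gamma> > 0"
    using assms by (simp_all add: \<sigma>_def)
  have jacobian: "g (\<delta> / \<gamma> * phi_inv \<sigma> t) * ig_density \<gamma> \<delta> (\<delta> / \<gamma> * phi_inv \<sigma> t)
        * (\<delta> / \<gamma> * phi_inv \<sigma> t / (\<sigma> * cosh (arsinh (t / (2 * \<sigma>)))))
      = g (\<delta> / \<gamma> * phi_inv \<sigma> t) * (2 * std_normal_density t / (1 + phi_inv \<sigma> t))" for t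
    using ig_density_msh_jacobian[OF assms(2,3), of t] unfolding \<sigma>_def[symmetric]
    by (simp only: mult.assoc)
  have "isCont (\<lambda>x. g x * ig_density \<gamma> \<delta> x) x" if "x > 0" for x
    using g_cont that isCont_ig_density[OF that]
    by (intro continuous_intros) (simp_all add: continuous_on_eq_continuous_at)
  then have "continuous_on {0<..} (\<lambda>x. g x * ig_density \<gamma> \<delta> x)"
    by (intro continuous_at_imp_continuous_on) simp
  note substitution = integral_substitution_phi_inv[OF a \<sigma> this _ , unfolded jacobian, OF _ integrable]
  show "set_integrable lborel {0<..} (\<lambda>x. g x * ig_density \<gamma> \<delta> x)"
    using substitution(1) g_nonneg ig_density_nonneg assms(3) by simp
  show "(LBINT x:{0<..}. g x * ig_density \<gamma> \<delta> x)
       = (\<integral>t. g (\<delta> / \<gamma> * phi_inv \<sigma> t) * (2 * std_normal_density t / (1 + phi_inv \<sigma> t)) \<partial>lborel)"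
    using substitution(2) g_nonneg ig_density_nonneg assms(3) by simp
qed

lemma ig_moment_gauss_hermite:
  fixes \<gamma> \<delta> :: real and n :: nat and z h :: "nat \<Rightarrow> real" and j :: int
  defines "\<sigma> \<equiv> sqrt (\<gamma> * \<delta>)"
  assumes "\<gamma> > 0" and "\<delta> > 0" and gh: "gauss_hermite n z h"
    and "1 - int n \<le> j" and "j \<le> int n"
  shows "set_integrable lborel {0<..} (\<lambda>x. x powr j * ig_density \<gamma> \<delta> x)"
    and "(LBINT x:{0<..}. x powr j * ig_density \<gamma> \<delta> x)
       = (\<Sum>k<n. (\<delta> / \<gamma> * phi_inv \<sigma> (z k)) powr j * (2 * h k / (1 + phi_inv \<sigma> (z k))))"
proof -
  have \<sigma>: "\<sigma> > 0"
    using assms by (simp add: \<sigma>_def)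
  have node_power: "(\<delta> / \<gamma> * phi_inv \<sigma> t) powr j * (2 * c / (1 + phi_inv \<sigma> t))
      = 2 * (\<delta> / \<gamma>) powr j * (msh_integrand \<sigma> j t * c)" for t c
    using powr_mult[of "\<delta> / \<gamma>" "phi_inv \<sigma> t" j] assms(2,3) phi_inv_pos[OF \<sigma>, of t]
    by (simp add: msh_integrand_def)
  obtain q where "degree q \<le> 2 * n - 1"
    and "\<And>t. msh_integrand \<sigma> j t + msh_integrand \<sigma> j (- t) = poly q t"
    using msh_integrand_even_part[OF \<sigma> assms(5,6)] by blast
  note exact = gauss_hermite_exact_even_part[OF gh borel_measurable_msh_integrand[OF \<sigma>]
      msh_integrand_nonneg[OF \<sigma>] this]
  have "integrable lborel
      (\<lambda>t. (\<delta> / \<gamma> * phi_inv \<sigma> t) powr j * (2 * std_normal_density t / (1 + phi_inv \<sigma> t)))"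
    unfolding node_power using exact(1) by simp
  moreover have "continuous_on {0<..} (\<lambda>x::real. x powr j)"
    by (intro continuous_intros) auto
  ultimately have substitution: "set_integrable lborel {0<..} (\<lambda>x. x powr j * ig_density \<gamma> \<delta> x)"
    "(LBINT x:{0<..}. x powr j * ig_density \<gamma> \<delta> x) = (\<integral>t. (\<delta> / \<gamma> * phi_inv \<sigma> t) powr j
        * (2 * std_normal_density t / (1 + phi_inv \<sigma> t)) \<partial>lborel)"
    using ig_integral_msh_substitution[OF assms(2,3)] unfolding \<sigma>_def by auto
  then show "set_integrable lborel {0<..} (\<lambda>x. x powr j * ig_density \<gamma> \<delta> x)"
    by simp
  have "(\<integral>t. (\<delta> / \<gamma> * phi_inv \<sigma> t) powr j * (2 * std_normal_density t / (1 + phi_inv \<sigma> t)) \<partial>lborel)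
      = 2 * (\<delta> / \<gamma>) powr j * (\<Sum>k<n. h k * msh_integrand \<sigma> j (z k))"
    unfolding node_power exact(2) by simp
  also have "\<dots> = (\<Sum>k<n. (\<delta> / \<gamma> * phi_inv \<sigma> (z k)) powr j * (2 * h k / (1 + phi_inv \<sigma> (z k))))"
    unfolding node_power sum_distrib_left by (simp add: mult_ac)
  finally show "(LBINT x:{0<..}. x powr j * ig_density \<gamma> \<delta> x)
       = (\<Sum>k<n. (\<delta> / \<gamma> * phi_inv \<sigma> (z k)) powr j * (2 * h k / (1 + phi_inv \<sigma> (z k))))"
    using substitution(2) by simp
qed

theorem corollary1:
  fixes \<gamma> \<delta> p :: real and n :: nat and z h :: "nat \<Rightarrow> real"
  assumes "\<gamma> > 0" and "\<delta> > 0" and "n \<ge> 1"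
    and "gauss_hermite n z h"
  defines "\<sigma> \<equiv> sqrt (\<gamma> * \<delta>)"
  defines "x \<equiv> (\<lambda>k. (\<delta> / \<gamma>) * phi_inv \<sigma> (z k))"
  defines "w \<equiv> (\<lambda>k. 2 * h k / (1 + phi_inv \<sigma> (z k)))"
  defines "wbar \<equiv> (\<lambda>k. gig_c \<gamma> \<delta> p * x k powr (p + 1/2) * w k)"
  shows "\<forall>j::int. 1 - int n \<le> j \<and> j \<le> int n \<longrightarrow>
           (let r = real_of_int j - (p + 1/2) in
              set_integrable lborel {0<..} (\<lambda>y. y powr r * gig_density \<gamma> \<delta> p y) \<and>
              (LBINT y:{0<..}. y powr r * gig_density \<gamma> \<delta> p y) = (\<Sum>k<n. x k powr r * wbar k))"
proof (intro allI impI)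
  fix j :: int
  assume j: "1 - int n \<le> j \<and> j \<le> int n"
  define r where "r = real_of_int j - (p + 1/2)"
  have tilt: "y powr r * gig_density \<gamma> \<delta> p y = gig_c \<gamma> \<delta> p * (y powr j * ig_density \<gamma> \<delta> y)"
    if "y \<in> {0<..}" for y
    using gig_density_eq_ig_density[OF assms(1,2)] that by (simp add: r_def powr_add[symmetric])
  note moment = ig_moment_gauss_hermite[OF assms(1,2,4), of j, folded \<sigma>_def]
  have "set_integrable lborel {0<..} (\<lambda>y. y powr r * gig_density \<gamma> \<delta> p y)"
    using moment(1) j by (subst set_integrable_cong[OF refl refl tilt]) auto
  moreover have "(LBINT y:{0<..}. y powr r * gig_density \<gamma> \<delta> p y)
      = (LBINT y:{0<..}. gig_c \<gamma> \<delta> p * (y powr j * ig_density \<gamma> \<delta> y))"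
    using tilt by (intro set_lebesgue_integral_cong) auto
  moreover have "\<dots> = gig_c \<gamma> \<delta> p * (\<Sum>k<n. x k powr j * w k)"
    using moment(2) j by (simp add: x_def w_def)
  moreover have "\<dots> = (\<Sum>k<n. x k powr r * wbar k)"
    by (simp add: sum_distrib_left wbar_def r_def powr_add[symmetric] mult_ac)
  ultimately show "let r = real_of_int j - (p + 1/2) in
      set_integrable lborel {0<..} (\<lambda>y. y powr r * gig_density \<gamma> \<delta> p y) \<and>
      (LBINT y:{0<..}. y powr r * gig_density \<gamma> \<delta> p y) = (\<Sum>k<n. x k powr r * wbar k)"
    unfolding r_def Let_def by simp
qed

end
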